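(* Let $\Delta\ge 4$ be an integer and let $c_1,\dots,c_\Delta$ be defined by $c_\Delta=\frac{1}{\Delta}$ and $ic_i+c_{i+1}=1$ for $i=1,\dots,\Delta-1$. Let $\Delta'$ be an integer with $3\le \Delta'<\Delta$ and let $G\in\mathcal{G}_{\Delta'}$. Then $$\alpha(G)\ge \sum_{i=1}^{\Delta'} c_i|V_i(G)|.$$
   Context: All graphs are simple, finite and undirected. For an integer $D\ge 3$, $\mathcal{G}_{D}$ denotes the set of connected graphs $G\neq K_{D+1}$ with maximum degree $D$. For a graph $G$ and $i\ge 1$, $V_i(G)$ is the set of vertices of $G$ of degree $i$. $\alpha(G)$ is the independence number of $G$. *)

theory Defs
  imports Complex_Main
begin

definition simple_graph :: "'a set \<Rightarrow> ('a \<Rightarrow> 'a \<Rightarrow> bool) \<Rightarrow> bool" where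
  "simple_graph V E \<longleftrightarrow> finite V \<and> (\<forall>u v. E u v \<longrightarrow> u \<in> V \<and> v \<in> V)
     \<and> (\<forall>u v. E u v \<longrightarrow> E v u) \<and> (\<forall>v. \<not> E v v)"

definition degree :: "'a set \<Rightarrow> ('a \<Rightarrow> 'a \<Rightarrow> bool) \<Rightarrow> 'a \<Rightarrow> nat" where
  "degree V E v = card {u \<in> V. E v u}"

definition deg_set :: "'a set \<Rightarrow> ('a \<Rightarrow> 'a \<Rightarrow> bool) \<Rightarrow> nat \<Rightarrow> 'a set" where
  "deg_set V E i = {v \<in> V. degree V E v = i}"

definition max_degree :: "'a set \<Rightarrow> ('a \<Rightarrow> 'a \<Rightarrow> bool) \<Rightarrow> nat \<Rightarrow> bool" where
  "max_degree V E D \<longleftrightarrow> (\<forall>v\<in>V. degree V E v \<le> D) \<and> (\<exists>v\<in>V. degree V E v = D)"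

definition connected_graph :: "'a set \<Rightarrow> ('a \<Rightarrow> 'a \<Rightarrow> bool) \<Rightarrow> bool" where
  "connected_graph V E \<longleftrightarrow> V \<noteq> {} \<and> (\<forall>u\<in>V. \<forall>v\<in>V. E\<^sup>*\<^sup>* u v)"

definition is_complete_graph :: "'a set \<Rightarrow> ('a \<Rightarrow> 'a \<Rightarrow> bool) \<Rightarrow> bool" where
  "is_complete_graph V E \<longleftrightarrow> (\<forall>u\<in>V. \<forall>v\<in>V. u \<noteq> v \<longrightarrow> E u v)"

definition is_K :: "'a set \<Rightarrow> ('a \<Rightarrow> 'a \<Rightarrow> bool) \<Rightarrow> nat \<Rightarrow> bool" where
  "is_K V E n \<longleftrightarrow> card V = n \<and> is_complete_graph V E"

definition graph_class :: "nat \<Rightarrow> 'a set \<Rightarrow> ('a \<Rightarrow> 'a \<Rightarrow> bool) \<Rightarrow> bool" where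
  "graph_class D V E \<longleftrightarrow> simple_graph V E \<and> connected_graph V E \<and> max_degree V E D
     \<and> \<not> is_K V E (D + 1)"

definition independent_set :: "'a set \<Rightarrow> ('a \<Rightarrow> 'a \<Rightarrow> bool) \<Rightarrow> 'a set \<Rightarrow> bool" where
  "independent_set V E S \<longleftrightarrow> S \<subseteq> V \<and> (\<forall>u\<in>S. \<forall>v\<in>S. \<not> E u v)"

definition indep_number :: "'a set \<Rightarrow> ('a \<Rightarrow> 'a \<Rightarrow> bool) \<Rightarrow> nat" where
  "indep_number V E = Max (card ` {S. independent_set V E S})"

end

theory Submission
  imports Defs
begin

text \<open>Give a vertex of degree \<open>d\<close> the weight \<open>c d\<close>, where \<open>c 0 = 1\<close>, except that the
  vertices of a complete component on \<open>k + 1\<close> vertices get \<open>1/(k+1)\<close>. In every graph of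
  maximum degree below \<open>\<Delta>\<close> there is a vertex \<open>v\<close> such that deleting \<open>N[v]\<close> lowers the
  total weight by at most 1, and induction yields an independent set of at least that size.
  Take for \<open>v\<close> a vertex of a complete component if there is one, and otherwise a vertex of
  minimum degree \<open>d\<close>. As \<open>c\<close> is decreasing and degrees only drop, the rest of the graph loses
  no weight: a complete component created by the deletion contains a vertex whose degree
  dropped, and this pays for it. The recurrence \<open>d c(d) + c(d+1) = 1\<close> bounds the weight of
  \<open>N[v]\<close> by 1 unless all of \<open>N[v]\<close> has degree \<open>d\<close>; then the convexity of \<open>c\<close> and a vertex
  outside \<open>N[v]\<close> whose degree drops make up the difference. A graph in \<open>graph_class \<Delta>'\<close> has
  no complete component, so its total weight is \<open>\<Sum> c(i) |V\<^sub>i|\<close>.\<close>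

section \<open>The coefficient sequence\<close>

locale coeff_seq =
  fixes D :: nat and c :: "nat \<Rightarrow> real"
  assumes D_pos: "0 < D"
    and c_0: "c 0 = 1"
    and c_D: "c D = 1 / real D"
    and c_rec: "\<And>i. 1 \<le> i \<Longrightarrow> i < D \<Longrightarrow> real i * c i + c (Suc i) = 1"
begin

lemma c_bounds:
  assumes "1 \<le> i" and "i \<le> D"
  shows "1 / real (Suc i) \<le> c i \<and> c i \<le> 1 / real i"
  using assms(2,1)
proof (induction i rule: inc_induct)
  case base
  then show ?case using c_D by (simp add: frac_le)
next
  case (step n)
  then have n: "1 \<le> n" "n < D" and lower: "1 / real (Suc (Suc n)) \<le> c (Suc n)"
    and upper: "c (Suc n) \<le> 1 / real (Suc n)" by auto
  have cn: "c n = (1 - c (Suc n)) / real n"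
    using c_rec[OF n] n(1) by (simp add: field_simps)
  have "1 / real (Suc n) = (1 - 1 / real (Suc n)) / real n"
    using n(1) by (simp add: field_simps add_nonneg_eq_0_iff)
  also have "\<dots> \<le> c n"
    unfolding cn using upper by (intro divide_right_mono) auto
  finally have "1 / real (Suc n) \<le> c n" .
  moreover have "0 \<le> c (Suc n)"
    using lower by (rule order_trans[rotated]) simp
  then have "c n \<le> 1 / real n"
    unfolding cn by (intro divide_right_mono) auto
  ultimately show ?case by simp
qed

lemma c_antimono:
  assumes "i \<le> j" and "j \<le> D"
  shows "c j \<le> c i"
  using assms
proof (induction j rule: dec_induct)
  case (step n)
  have "c (Suc n) \<le> c n"
  proof (cases "n = 0")
    case True
    then show ?thesis using c_bounds[of 1] D_pos c_0 by simp
  next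
    case False
    then show ?thesis
      using c_bounds[of n] c_bounds[of "Suc n"] step.prems by (simp add: order_trans)
  qed
  then show ?case using step by simp
qed simp

lemma c_nonneg: "i \<le> D \<Longrightarrow> 0 \<le> c i"
  using c_antimono[of i D] c_D by (simp add: order_trans[rotated])

lemma c_rec_le: "k < D \<Longrightarrow> real k * c k + c (Suc k) \<le> 1"
  using c_rec[of k] c_antimono[of 0 1] c_0 by (cases "k = 0") auto

lemma c_rec_le_shifted:
  assumes "k < D"
  shows "c k + real k * c (Suc k) \<le> 1"
proof (cases "k = 0")
  case True
  then show ?thesis using c_0 by simp
next
  case False
  have "(real k - 1) * c (Suc k) \<le> (real k - 1) * c k"
    using False assms c_antimono[of k "Suc k"] by (intro mult_left_mono) auto
  then show ?thesis using c_rec[of k] False assms by (simp add: algebra_simps)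
qed

lemma sum_c_le_1:
  assumes "finite K" and "card K = Suc k" and "y0 \<in> K" and "Suc k \<le> h y0"
    and bounds: "\<And>y. y \<in> K \<Longrightarrow> k \<le> h y \<and> h y \<le> D"
  shows "(\<Sum>y\<in>K. c (h y)) \<le> 1"
proof -
  have "(\<Sum>y\<in>K. c (h y)) = c (h y0) + (\<Sum>y\<in>K - {y0}. c (h y))"
    using sum.remove[OF assms(1,3)] .
  also have "\<dots> \<le> c (Suc k) + real k * c k"
  proof (rule add_mono)
    show "c (h y0) \<le> c (Suc k)"
      using assms(4) bounds[OF assms(3)] by (intro c_antimono) auto
    have "(\<Sum>y\<in>K - {y0}. c (h y)) \<le> real (card (K - {y0})) * c k"
      using bounds by (intro sum_bounded_above c_antimono) auto
    then show "(\<Sum>y\<in>K - {y0}. c (h y)) \<le> real k * c k"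
      using assms(1-3) by simp
  qed
  also have "\<dots> \<le> 1"
    using c_rec_le[of k] assms(4) bounds[OF assms(3)] by simp
  finally show ?thesis .
qed

text \<open>Besides the recurrence, this uses only the bounds
  \<open>1/(d+1) \<le> c d\<close> and \<open>1/(d+2) \<le> c (d+1)\<close>.\<close>
lemma c_convex:
  assumes "2 \<le> d" and "d < D"
  shows "c d - c (Suc d) \<le> c (d - 1) - c d"
proof -
  define t where "t = real d"
  have t: "2 \<le> t" using assms(1) by (simp add: t_def)
  have "real (d - 1) * c (d - 1) + c (Suc (d - 1)) = 1"
    using assms by (intro c_rec) auto
  then have prev: "(t - 1) * c (d - 1) = 1 - c d"
    using assms by (simp add: t_def of_nat_diff)
  have succ: "c (Suc d) = 1 - t * c d"
    using c_rec[of d] assms by (simp add: t_def)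
  have "1 \<le> c (Suc d) * (t + 2)"
    using c_bounds[of "Suc d"] assms by (simp add: t_def field_simps)
  moreover have "1 \<le> c d * (t + 1)"
    using c_bounds[of d] assms by (simp add: t_def field_simps)
  ultimately have "c d * (t * t + t - 1) \<le> t"
    unfolding succ by (simp add: algebra_simps)
  then have "(t - 1) * (2 * c d) \<le> (t - 1) * (c (d - 1) + c (Suc d))"
    using prev unfolding succ by (simp add: algebra_simps)
  then show ?thesis using t by simp
qed

end

section \<open>Neighbourhoods and complete components\<close>

definition nbhd :: "'a set \<Rightarrow> ('a \<Rightarrow> 'a \<Rightarrow> bool) \<Rightarrow> 'a \<Rightarrow> 'a set" where
  "nbhd V E x = {u \<in> V. E x u}"

definition closed_nbhd :: "'a set \<Rightarrow> ('a \<Rightarrow> 'a \<Rightarrow> bool) \<Rightarrow> 'a \<Rightarrow> 'a set" where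
  "closed_nbhd V E x = insert x (nbhd V E x)"

text \<open>For \<open>x \<in> V\<close>: the closed neighbourhood of \<open>x\<close> is a connected component of the
  graph induced on \<open>V\<close>, and this component is complete.\<close>
definition in_complete_component :: "'a set \<Rightarrow> ('a \<Rightarrow> 'a \<Rightarrow> bool) \<Rightarrow> 'a \<Rightarrow> bool" where
  "in_complete_component V E x \<longleftrightarrow>
     (\<forall>u \<in> closed_nbhd V E x. closed_nbhd V E u = closed_nbhd V E x)"

lemma degree_eq_card_nbhd: "degree V E x = card (nbhd V E x)"
  by (simp add: degree_def nbhd_def)

lemma finite_nbhd: "finite V \<Longrightarrow> finite (nbhd V E x)"
  by (simp add: nbhd_def)

lemma finite_closed_nbhd: "finite V \<Longrightarrow> finite (closed_nbhd V E x)"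
  by (simp add: closed_nbhd_def finite_nbhd)

lemma self_in_closed_nbhd: "x \<in> closed_nbhd V E x"
  by (simp add: closed_nbhd_def)

lemma closed_nbhd_subset: "x \<in> V \<Longrightarrow> closed_nbhd V E x \<subseteq> V"
  by (auto simp: closed_nbhd_def nbhd_def)

lemma nbhd_mono: "W \<subseteq> V \<Longrightarrow> nbhd W E x \<subseteq> nbhd V E x"
  by (auto simp: nbhd_def)

lemma degree_mono: "finite V \<Longrightarrow> W \<subseteq> V \<Longrightarrow> degree W E x \<le> degree V E x"
  unfolding degree_eq_card_nbhd by (intro card_mono finite_nbhd nbhd_mono)

lemma nbhd_eq_if_degree_eq:
  assumes "finite V" and "W \<subseteq> V" and "degree W E x = degree V E x"
  shows "nbhd W E x = nbhd V E x"
  using card_subset_eq[OF finite_nbhd nbhd_mono] assms by (simp add: degree_eq_card_nbhd)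

lemma degree_less_if_neighbour_removed:
  assumes "finite V" and "W \<subseteq> V" and "u \<in> nbhd V E w" and "u \<notin> W"
  shows "degree W E w < degree V E w"
proof -
  have "nbhd W E w \<subset> nbhd V E w"
    using nbhd_mono[OF assms(2)] assms(3,4) by (auto simp: nbhd_def)
  then show ?thesis
    unfolding degree_eq_card_nbhd by (rule psubset_card_mono[OF finite_nbhd[OF assms(1)]])
qed

lemma in_complete_componentD:
  assumes "in_complete_component V E x" and "y \<in> closed_nbhd V E x"
  shows "closed_nbhd V E y = closed_nbhd V E x" and "in_complete_component V E y"
  using assms by (auto simp: in_complete_component_def)

lemma in_complete_component_adjacent:
  assumes "in_complete_component V E x"
    and "u \<in> closed_nbhd V E x" and "w \<in> closed_nbhd V E x" and "u \<noteq> w"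
  shows "E u w"
  using in_complete_componentD(1)[OF assms(1,2)] assms(3,4)
  by (auto simp: closed_nbhd_def nbhd_def)

lemma in_complete_component_closed:
  assumes "in_complete_component V E x" and "y \<in> closed_nbhd V E x" and "z \<in> nbhd V E y"
  shows "z \<in> closed_nbhd V E x"
  using in_complete_componentD(1)[OF assms(1,2)] assms(3) by (auto simp: closed_nbhd_def)

lemma in_complete_component_supergraph:
  assumes "finite V" and "W \<subseteq> V" and "in_complete_component W E x"
    and same_degree: "\<And>z. z \<in> closed_nbhd W E x \<Longrightarrow> degree W E z = degree V E z"
  shows "in_complete_component V E x"
proof -
  have closed_eq: "closed_nbhd W E z = closed_nbhd V E z" if "z \<in> closed_nbhd W E x" for z
    using nbhd_eq_if_degree_eq[OF assms(1,2) same_degree[OF that]] by (simp add: closed_nbhd_def)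
  then show ?thesis
    using assms(3) self_in_closed_nbhd unfolding in_complete_component_def by metis
qed

lemma in_complete_component_union_of_components:
  assumes "x \<in> W" and same_nbhd: "\<And>y. y \<in> W \<Longrightarrow> nbhd W E y = nbhd V E y"
  shows "in_complete_component W E x \<longleftrightarrow> in_complete_component V E x"
proof -
  have closed_eq: "closed_nbhd W E y = closed_nbhd V E y" if "y \<in> W" for y
    using same_nbhd[OF that] by (simp add: closed_nbhd_def)
  have "closed_nbhd W E x \<subseteq> W"
    using assms(1) by (rule closed_nbhd_subset)
  then show ?thesis
    using closed_eq assms(1) unfolding in_complete_component_def by (metis subsetD)
qed

locale undirected =
  fixes E :: "'a \<Rightarrow> 'a \<Rightarrow> bool"
  assumes edge_sym: "E u v \<Longrightarrow> E v u"
    and no_loop: "\<not> E v v"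
begin

lemma card_closed_nbhd: "finite V \<Longrightarrow> card (closed_nbhd V E x) = Suc (degree V E x)"
  using no_loop by (simp add: closed_nbhd_def nbhd_def degree_def)

lemma degree_in_complete_component:
  assumes "finite V" and "in_complete_component V E x" and "y \<in> closed_nbhd V E x"
  shows "degree V E y = degree V E x"
  using card_closed_nbhd[OF assms(1)] in_complete_componentD(1)[OF assms(2,3)] by (metis Suc_inject)

lemma not_in_complete_component_neighbour:
  assumes "in_complete_component V E x" and "y \<in> V" and "y \<notin> closed_nbhd V E x"
    and "u \<in> closed_nbhd V E x"
  shows "\<not> E y u"
  using in_complete_component_closed[OF assms(1,4), of y] assms(2,3) edge_sym
  by (auto simp: nbhd_def)


lemma obtain_neighbour_leaving_closed_nbhd:
  assumes "finite V" and "v \<in> V" and "\<not> in_complete_component V E v"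
    and same_degree: "\<And>u. u \<in> nbhd V E v \<Longrightarrow> degree V E u = degree V E v"
  obtains u w where "u \<in> nbhd V E v" and "w \<in> nbhd V E u" and "w \<notin> closed_nbhd V E v"
    and "2 \<le> degree V E v"
proof -
  let ?N = "closed_nbhd V E v"
  let ?d = "degree V E v"
  obtain u where u: "u \<in> ?N" "closed_nbhd V E u \<noteq> ?N"
    using assms(3) unfolding in_complete_component_def by blast
  then have u_nbhd: "u \<in> nbhd V E v"
    by (auto simp: closed_nbhd_def)
  then have "card (closed_nbhd V E u) = card ?N"
    using card_closed_nbhd[OF assms(1)] same_degree by simp
  then obtain w where w: "w \<in> closed_nbhd V E u" "w \<notin> ?N"
    using u(2) card_subset_eq[OF finite_closed_nbhd[OF assms(1)]] by blast
  then have w_nbhd: "w \<in> nbhd V E u" and "w \<noteq> v"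
    using u(1) by (auto simp: closed_nbhd_def)
  have "{u, v, w} \<subseteq> closed_nbhd V E u"
    using w(1) u_nbhd edge_sym assms(2) by (auto simp: closed_nbhd_def nbhd_def)
  then have "card {u, v, w} \<le> Suc ?d"
    using card_mono[OF finite_closed_nbhd[OF assms(1)]] card_closed_nbhd[OF assms(1)]
      same_degree[OF u_nbhd] by metis
  moreover have "u \<noteq> v" "w \<noteq> u"
    using u_nbhd w_nbhd no_loop by (auto simp: nbhd_def)
  then have "card {u, v, w} = 3"
    using \<open>w \<noteq> v\<close> by auto
  ultimately have "2 \<le> ?d" by simp
  then show ?thesis
    using that u_nbhd w_nbhd w(2) by blast
qed
end

section \<open>Weights\<close>

lemma sum_block_averages:
  fixes f :: "'a \<Rightarrow> real"
  assumes "finite A"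
    and block: "\<And>x. x \<in> A \<Longrightarrow> x \<in> B x \<and> B x \<subseteq> A"
    and same_block: "\<And>x y. x \<in> A \<Longrightarrow> y \<in> B x \<Longrightarrow> B y = B x"
  shows "(\<Sum>x\<in>A. (\<Sum>y\<in>B x. f y) / real (card (B x))) = (\<Sum>x\<in>A. f x)"
proof -
  have blocks_containing: "{x \<in> A. y \<in> B x} = B y" if "y \<in> A" for y
    using block same_block that by blast
  have "(\<Sum>x\<in>A. (\<Sum>y\<in>B x. f y) / real (card (B x)))
      = (\<Sum>x\<in>A. \<Sum>y\<in>{y \<in> A. y \<in> B x}. f y / real (card (B y)))"
  proof (rule sum.cong[OF refl])
    fix x assume "x \<in> A"
    then have "{y \<in> A. y \<in> B x} = B x" using block by blast
    then show "(\<Sum>y\<in>B x. f y) / real (card (B x)) = (\<Sum>y\<in>{y \<in> A. y \<in> B x}. f y / real (card (B y)))"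
      using same_block[OF \<open>x \<in> A\<close>] by (simp add: sum_divide_distrib)
  qed
  also have "\<dots> = (\<Sum>y\<in>A. \<Sum>x\<in>{x \<in> A. y \<in> B x}. f y / real (card (B y)))"
    using sum.swap_restrict[OF assms(1) assms(1)] .
  also have "\<dots> = (\<Sum>y\<in>A. f y)"
  proof (rule sum.cong[OF refl])
    fix y assume "y \<in> A"
    moreover have "finite (B y)" using block[OF \<open>y \<in> A\<close>] assms(1) finite_subset by blast
    ultimately have "card (B y) \<noteq> 0" using block by (metis card_0_eq empty_iff)
    then show "(\<Sum>x\<in>{x \<in> A. y \<in> B x}. f y / real (card (B y))) = f y"
      by (simp add: blocks_containing[OF \<open>y \<in> A\<close>])
  qed
  finally show ?thesis .
qed

definition weight :: "(nat \<Rightarrow> real) \<Rightarrow> 'a set \<Rightarrow> ('a \<Rightarrow> 'a \<Rightarrow> bool) \<Rightarrow> 'a \<Rightarrow> real" where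
  "weight c V E x = (if in_complete_component V E x then 1 / real (card (closed_nbhd V E x))
     else c (degree V E x))"

definition total_weight :: "(nat \<Rightarrow> real) \<Rightarrow> 'a set \<Rightarrow> ('a \<Rightarrow> 'a \<Rightarrow> bool) \<Rightarrow> real" where
  "total_weight c V E = (\<Sum>x\<in>V. weight c V E x)"

text \<open>In the applications \<open>h\<close> is the degree in a supergraph. On a complete component
  \<open>c \<circ> h\<close> is replaced by its average over the component, which does not change its sum.\<close>
definition weight_slack ::
  "(nat \<Rightarrow> real) \<Rightarrow> 'a set \<Rightarrow> ('a \<Rightarrow> 'a \<Rightarrow> bool) \<Rightarrow> ('a \<Rightarrow> nat) \<Rightarrow> 'a \<Rightarrow> real" where
  "weight_slack c V E h x = weight c V E x -
     (if in_complete_component V E x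
      then (\<Sum>y\<in>closed_nbhd V E x. c (h y)) / real (card (closed_nbhd V E x)) else c (h x))"

lemma total_weight_eq_sum_plus_slack:
  assumes "finite V"
  shows "total_weight c V E = (\<Sum>x\<in>V. c (h x)) + (\<Sum>x\<in>V. weight_slack c V E h x)"
proof -
  let ?P = "{x. in_complete_component V E x}"
  let ?avg = "\<lambda>x. (\<Sum>y\<in>closed_nbhd V E x. c (h y)) / real (card (closed_nbhd V E x))"
  have "(\<Sum>x\<in>V. if in_complete_component V E x then ?avg x else c (h x))
      = (\<Sum>x\<in>V \<inter> ?P. ?avg x) + (\<Sum>x\<in>V - ?P. c (h x))"
    using assms by (simp add: sum.If_cases Diff_eq)
  also have "(\<Sum>x\<in>V \<inter> ?P. ?avg x) = (\<Sum>x\<in>V \<inter> ?P. c (h x))"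
    using assms by (intro sum_block_averages)
      (auto dest: closed_nbhd_subset in_complete_componentD simp: self_in_closed_nbhd)
  also have "\<dots> + (\<Sum>x\<in>V - ?P. c (h x)) = (\<Sum>x\<in>V. c (h x))"
    using sum.Int_Diff[OF assms, symmetric] .
  finally have "(\<Sum>x\<in>V. if in_complete_component V E x then ?avg x else c (h x))
      = (\<Sum>x\<in>V. c (h x))" .
  then show ?thesis
    by (simp add: total_weight_def weight_slack_def sum_subtractf)
qed

lemma sum_weight_slack_complete_component:
  assumes "finite V" and "in_complete_component V E x"
  shows "(\<Sum>y\<in>closed_nbhd V E x. weight_slack c V E h y) = 1 - (\<Sum>y\<in>closed_nbhd V E x. c (h y))"
proof -
  let ?K = "closed_nbhd V E x"
  have "weight_slack c V E h y = (1 - (\<Sum>y\<in>?K. c (h y))) / real (card ?K)" if "y \<in> ?K" for y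
    using in_complete_componentD[OF assms(2) that]
    by (simp add: weight_slack_def weight_def diff_divide_distrib)
  moreover have "card ?K \<noteq> 0"
    using finite_closed_nbhd[OF assms(1)] self_in_closed_nbhd by (metis card_0_eq empty_iff)
  ultimately show ?thesis by simp
qed

lemma weight_union_of_components:
  assumes "x \<in> W" and "\<And>y. y \<in> W \<Longrightarrow> nbhd W E y = nbhd V E y"
  shows "weight c W E x = weight c V E x"
  using in_complete_component_union_of_components[OF assms] assms
  by (simp add: weight_def closed_nbhd_def degree_eq_card_nbhd)

context undirected
begin

lemma total_weight_remove_complete_component:
  assumes "finite V" and "v \<in> V" and "in_complete_component V E v"
  shows "total_weight c V E = 1 + total_weight c (V - closed_nbhd V E v) E"
proof -
  let ?K = "closed_nbhd V E v"
  let ?W = "V - ?K"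
  have "(\<Sum>x\<in>?K. weight c V E x) = (\<Sum>x\<in>?K. 1 / real (card ?K))"
    using in_complete_componentD[OF assms(3)] by (simp add: weight_def)
  also have "\<dots> = 1"
    using card_closed_nbhd[OF assms(1)] by simp
  finally have K_part: "(\<Sum>x\<in>?K. weight c V E x) = 1" .
  have "nbhd ?W E y = nbhd V E y" if "y \<in> ?W" for y
    using not_in_complete_component_neighbour[OF assms(3)] that by (auto simp: nbhd_def)
  then have W_part: "(\<Sum>x\<in>?W. weight c V E x) = total_weight c ?W E"
    unfolding total_weight_def by (intro sum.cong refl weight_union_of_components[symmetric])
  show ?thesis
    using sum.subset_diff[OF closed_nbhd_subset[OF assms(2), of E] assms(1), of "weight c V E"]
      K_part W_part by (simp add: total_weight_def)
qed

end

section \<open>Deleting a closed neighbourhood\<close>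

locale independence_bound = coeff_seq D c + undirected E
  for D :: nat and c :: "nat \<Rightarrow> real" and E :: "'a \<Rightarrow> 'a \<Rightarrow> bool"

locale without_complete_components = independence_bound D c E
  for D :: nat and c :: "nat \<Rightarrow> real" and E :: "'a \<Rightarrow> 'a \<Rightarrow> bool" +
  fixes V :: "'a set"
  assumes finite_V: "finite V"
    and degree_less_D: "\<And>x. x \<in> V \<Longrightarrow> degree V E x < D"
    and no_complete_component: "\<And>x. x \<in> V \<Longrightarrow> \<not> in_complete_component V E x"
begin

lemma total_weight_eq_sum_c_degree: "total_weight c V E = (\<Sum>x\<in>V. c (degree V E x))"
  using no_complete_component by (simp add: total_weight_def weight_def)

text \<open>A complete component of \<open>W\<close> contains a vertex whose degree is smaller in \<open>W\<close> than
  in \<open>V\<close>, since otherwise it would be a complete component of \<open>V\<close>.\<close>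
lemma weight_slack_nonneg:
  assumes "W \<subseteq> V" and "x \<in> W"
  shows "0 \<le> weight_slack c W E (degree V E) x"
proof (cases "in_complete_component W E x")
  case True
  let ?K = "closed_nbhd W E x"
  have finite_W: "finite W" using assms(1) finite_V finite_subset by blast
  obtain z where z: "z \<in> ?K" "degree W E z < degree V E z"
    using in_complete_component_supergraph[OF finite_V assms(1) True]
      degree_mono[OF finite_V assms(1)] no_complete_component assms
    by (meson le_neq_implies_less subsetD)
  have "(\<Sum>y\<in>?K. c (degree V E y)) \<le> 1"
  proof (rule sum_c_le_1)
    show "Suc (degree W E x) \<le> degree V E z"
      using z degree_in_complete_component[OF finite_W True] by simp
    show "degree W E x \<le> degree V E y \<and> degree V E y \<le> D" if "y \<in> ?K" for y
      using that degree_in_complete_component[OF finite_W True] degree_mono[OF finite_V assms(1)]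
        degree_less_D closed_nbhd_subset[OF assms(2)] assms(1)
      by (metis less_imp_le_nat subsetD)
  qed (use z finite_W card_closed_nbhd finite_closed_nbhd in auto)
  then show ?thesis
    using True by (simp add: weight_slack_def weight_def divide_right_mono)
next
  case False
  have "degree W E x \<le> degree V E x" "degree V E x \<le> D"
    using assms degree_mono[OF finite_V assms(1)] degree_less_D[of x] by auto
  then show ?thesis
    using False by (simp add: weight_slack_def weight_def c_antimono)
qed

lemma sum_c_degree_le_total_weight:
  assumes "W \<subseteq> V"
  shows "(\<Sum>x\<in>W. c (degree V E x)) \<le> total_weight c W E"
proof -
  have "0 \<le> (\<Sum>x\<in>W. weight_slack c W E (degree V E) x)"
    using weight_slack_nonneg[OF assms] by (rule sum_nonneg)
  then show ?thesis
    using total_weight_eq_sum_plus_slack[OF finite_subset[OF assms finite_V],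
        where h = "degree V E"]
    by simp
qed

lemma sum_weight_slack_ge_gap:
  assumes "W \<subseteq> V" and "w \<in> W" and "2 \<le> d" and "degree V E w = d" and "degree W E w < d"
    and min_nbhd: "\<And>y. y \<in> closed_nbhd W E w \<Longrightarrow> d \<le> degree V E y"
  shows "c (d - 1) - c d \<le> (\<Sum>x\<in>W. weight_slack c W E (degree V E) x)"
proof -
  let ?slack = "weight_slack c W E (degree V E)"
  have finite_W: "finite W" using assms(1) finite_V finite_subset by blast
  have slack_nonneg: "\<And>x. x \<in> W \<Longrightarrow> 0 \<le> ?slack x"
    using weight_slack_nonneg[OF assms(1)] .
  have d_less_D: "d < D" using degree_less_D assms(1,2,4) by blast
  show ?thesis
  proof (cases "in_complete_component W E w")
    case False
    have "c (d - 1) \<le> c (degree W E w)"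
      using assms(5) d_less_D by (intro c_antimono) auto
    then have "c (d - 1) - c d \<le> ?slack w"
      using False assms(4) by (simp add: weight_slack_def weight_def)
    also have "\<dots> \<le> (\<Sum>x\<in>W. ?slack x)"
      using assms(2) slack_nonneg finite_W by (intro member_le_sum) auto
    finally show ?thesis .
  next
    case True
    let ?K = "closed_nbhd W E w"
    have "d \<le> degree V E y \<and> degree V E y \<le> D" if "y \<in> ?K" for y
      using min_nbhd[OF that] degree_less_D closed_nbhd_subset[OF assms(2)] assms(1) that
      by (meson less_imp_le_nat subsetD)
    then have "(\<Sum>y\<in>?K. c (degree V E y)) \<le> real (card ?K) * c d"
      by (intro sum_bounded_above c_antimono) auto
    moreover have "real (card ?K) * c d \<le> real d * c d"
      using card_closed_nbhd[OF finite_W] assms(5) c_nonneg d_less_D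
      by (intro mult_right_mono) auto
    moreover have "c (d - 1) + real (d - 1) * c d \<le> 1"
      using c_rec_le_shifted[of "d - 1"] assms(3) d_less_D by simp
    ultimately have "c (d - 1) - c d \<le> (\<Sum>x\<in>?K. ?slack x)"
      using sum_weight_slack_complete_component[OF finite_W True, where c = c and h = "degree V E"]
        assms(3)
      by (simp add: of_nat_diff algebra_simps)
    also have "\<dots> \<le> (\<Sum>x\<in>W. ?slack x)"
      using closed_nbhd_subset[OF assms(2)] slack_nonneg by (intro sum_mono2[OF finite_W]) auto
    finally show ?thesis .
  qed
qed

lemma sum_c_degree_plus_gap_le_total_weight:
  assumes "W \<subseteq> V" and "w \<in> W" and "2 \<le> d" and "degree V E w = d" and "degree W E w < d"
    and "\<And>y. y \<in> closed_nbhd W E w \<Longrightarrow> d \<le> degree V E y"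
  shows "(\<Sum>x\<in>W. c (degree V E x)) + (c (d - 1) - c d) \<le> total_weight c W E"
  using sum_weight_slack_ge_gap[OF assms]
    total_weight_eq_sum_plus_slack[OF finite_subset[OF assms(1) finite_V], where h = "degree V E"]
  by simp

lemma total_weight_split:
  assumes "v \<in> V"
  shows "total_weight c V E = (\<Sum>x\<in>V - closed_nbhd V E v. c (degree V E x))
    + (\<Sum>x\<in>closed_nbhd V E v. c (degree V E x))"
  using total_weight_eq_sum_c_degree sum.subset_diff[OF closed_nbhd_subset[OF assms] finite_V]
  by simp

lemma removal_bound_higher_neighbour:
  assumes "v \<in> V" and min_degree: "\<And>x. x \<in> V \<Longrightarrow> degree V E v \<le> degree V E x"
    and "u \<in> nbhd V E v" and "degree V E v < degree V E u"
  shows "total_weight c V E \<le> 1 + total_weight c (V - closed_nbhd V E v) E"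
proof -
  let ?N = "closed_nbhd V E v"
  have "(\<Sum>x\<in>?N. c (degree V E x)) \<le> 1"
  proof (rule sum_c_le_1)
    show "degree V E v \<le> degree V E y \<and> degree V E y \<le> D" if "y \<in> ?N" for y
      using that closed_nbhd_subset[OF assms(1)] min_degree degree_less_D
      by (meson less_imp_le_nat subsetD)
    show "finite ?N" "card ?N = Suc (degree V E v)"
      using finite_closed_nbhd card_closed_nbhd finite_V by auto
    show "u \<in> ?N" "Suc (degree V E v) \<le> degree V E u"
      using assms(3,4) by (auto simp: closed_nbhd_def)
  qed
  moreover have "(\<Sum>x\<in>V - ?N. c (degree V E x)) \<le> total_weight c (V - ?N) E"
    by (rule sum_c_degree_le_total_weight) auto
  ultimately show ?thesis
    using total_weight_split[OF assms(1)] by simp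
qed

text \<open>The excess \<open>(d + 1) c d - 1 = c d - c (d + 1)\<close> of \<open>N[v]\<close> is paid for by the convexity
  of \<open>c\<close> and by the drop in degree of a vertex \<open>w \<notin> N[v]\<close> adjacent to \<open>N[v]\<close>.\<close>
lemma removal_bound_min_degree_nbhds:
  assumes "v \<in> V" and min_degree: "\<And>x. x \<in> V \<Longrightarrow> degree V E v \<le> degree V E x"
    and same_degree:
      "\<And>x u. x \<in> V \<Longrightarrow> degree V E x = degree V E v \<Longrightarrow> u \<in> nbhd V E x
        \<Longrightarrow> degree V E u = degree V E v"
  shows "total_weight c V E \<le> 1 + total_weight c (V - closed_nbhd V E v) E"
proof -
  let ?N = "closed_nbhd V E v"
  let ?W = "V - ?N"
  let ?d = "degree V E v"
  obtain u w where u: "u \<in> nbhd V E v" and w: "w \<in> nbhd V E u" "w \<notin> ?N" and d2: "2 \<le> ?d"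
    using obtain_neighbour_leaving_closed_nbhd[OF finite_V assms(1) no_complete_component[OF assms(1)]]
      same_degree[OF assms(1) refl] by blast
  then have "u \<in> V" and "u \<in> ?N" and deg_u: "degree V E u = ?d"
    using same_degree[OF assms(1) refl] by (auto simp: nbhd_def closed_nbhd_def)
  then have "w \<in> ?W" and deg_w: "degree V E w = ?d" and "u \<in> nbhd V E w"
    using w same_degree[OF \<open>u \<in> V\<close> deg_u] edge_sym by (auto simp: nbhd_def)
  then have "degree ?W E w < ?d"
    using degree_less_if_neighbour_removed[OF finite_V Diff_subset] \<open>u \<in> ?N\<close> deg_w by force
  then have W_part: "(\<Sum>x\<in>?W. c (degree V E x)) + (c (?d - 1) - c ?d) \<le> total_weight c ?W E"
    using \<open>w \<in> ?W\<close> d2 deg_w min_degree closed_nbhd_subset[OF \<open>w \<in> ?W\<close>]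
    by (intro sum_c_degree_plus_gap_le_total_weight) auto
  have "(\<Sum>x\<in>?N. c (degree V E x)) = (\<Sum>x\<in>?N. c ?d)"
    using same_degree[OF assms(1) refl] by (intro sum.cong) (auto simp: closed_nbhd_def)
  then have N_part: "(\<Sum>x\<in>?N. c (degree V E x)) = real (Suc ?d) * c ?d"
    using card_closed_nbhd[OF finite_V] by simp
  have "?d < D" using degree_less_D assms(1) .
  then have "real ?d * c ?d + c (Suc ?d) = 1" and "c ?d - c (Suc ?d) \<le> c (?d - 1) - c ?d"
    using c_rec[of ?d] c_convex[OF d2] d2 by auto
  then show ?thesis
    using total_weight_split[OF assms(1)] W_part N_part by (simp add: algebra_simps)
qed

end

context independence_bound
begin

lemma exists_removable_vertex:
  assumes "finite V" and "V \<noteq> {}" and "\<And>x. x \<in> V \<Longrightarrow> degree V E x < D"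
  shows "\<exists>v\<in>V. total_weight c V E \<le> 1 + total_weight c (V - closed_nbhd V E v) E"
proof (cases "\<exists>v\<in>V. in_complete_component V E v")
  case True
  then show ?thesis
    using total_weight_remove_complete_component[OF assms(1)] by fastforce
next
  case False
  then interpret without_complete_components D c E V
    using assms by unfold_locales auto
  obtain v where "v \<in> V" and min_degree: "\<And>x. x \<in> V \<Longrightarrow> degree V E v \<le> degree V E x"
    using arg_min_if_finite(1)[OF assms(1,2)] arg_min_least[OF assms(1,2)] by blast
  show ?thesis
  proof (cases "\<exists>x\<in>V. degree V E x = degree V E v
      \<and> (\<exists>u\<in>nbhd V E x. degree V E v < degree V E u)")
    case True
    then obtain x u where "x \<in> V" "degree V E x = degree V E v"
      and "u \<in> nbhd V E x" "degree V E x < degree V E u" by auto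
    then show ?thesis
      using removal_bound_higher_neighbour min_degree by metis
  next
    case False
    then have "degree V E u = degree V E v"
      if "x \<in> V" "degree V E x = degree V E v" "u \<in> nbhd V E x" for x u
      using that min_degree[of u] by (force simp: nbhd_def)
    then show ?thesis
      using removal_bound_min_degree_nbhds[OF \<open>v \<in> V\<close> min_degree] \<open>v \<in> V\<close> by blast
  qed
qed

lemma exists_independent_set_ge_total_weight:
  assumes "finite V" and "\<And>x. x \<in> V \<Longrightarrow> degree V E x < D"
  shows "\<exists>S. independent_set V E S \<and> total_weight c V E \<le> real (card S)"
  using assms
proof (induction "card V" arbitrary: V rule: less_induct)
  case less
  show ?case
  proof (cases "V = {}")
    case True
    then show ?thesis
      by (auto simp: independent_set_def total_weight_def)
  next
    case False
    then obtain v where "v \<in> V"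
      and removable: "total_weight c V E \<le> 1 + total_weight c (V - closed_nbhd V E v) E"
      using exists_removable_vertex less.prems by blast
    let ?W = "V - closed_nbhd V E v"
    have "card ?W < card V"
      using \<open>v \<in> V\<close> less.prems(1) by (intro psubset_card_mono) (auto simp: closed_nbhd_def)
    moreover have "degree ?W E x < D" if "x \<in> ?W" for x
      using that less.prems degree_mono[OF less.prems(1), of ?W]
      by (meson DiffD1 Diff_subset le_less_trans)
    ultimately obtain S where S: "independent_set ?W E S" "total_weight c ?W E \<le> real (card S)"
      using less.hyps less.prems(1) by blast
    have "independent_set V E (insert v S)"
      using S(1) \<open>v \<in> V\<close> edge_sym no_loop
      by (auto simp: independent_set_def closed_nbhd_def nbhd_def)
    moreover have "card (insert v S) = Suc (card S)"
      using S(1) less.prems(1) by (intro card_insert_disjoint)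
        (auto simp: independent_set_def closed_nbhd_def intro: finite_subset)
    ultimately show ?thesis
      using removable S(2) by (intro exI[of _ "insert v S"]) auto
  qed
qed

end

section \<open>Graphs of the class \<open>graph_class\<close>\<close>

lemma in_complete_component_if_degree_0:
  assumes "finite V" and "degree V E x = 0"
  shows "in_complete_component V E x"
  using assms
  by (simp add: in_complete_component_def closed_nbhd_def degree_eq_card_nbhd finite_nbhd)

lemma reachable_in_closed_nbhd:
  assumes "in_complete_component V E x" and edges_in_V: "\<And>u w. E u w \<Longrightarrow> w \<in> V"
    and "E\<^sup>*\<^sup>* x y"
  shows "y \<in> closed_nbhd V E x"
  using assms(3)
proof (induction rule: rtranclp_induct)
  case base
  then show ?case by (rule self_in_closed_nbhd)
next
  case (step y z)
  then have "z \<in> nbhd V E y"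
    using edges_in_V by (simp add: nbhd_def)
  then show ?case
    using in_complete_component_closed[OF assms(1) step.IH] by blast
qed

lemma graph_class_no_complete_component:
  assumes "graph_class D V E" and "x \<in> V"
  shows "\<not> in_complete_component V E x"
proof
  assume complete: "in_complete_component V E x"
  have simple: "simple_graph V E" and connected: "\<forall>u\<in>V. \<forall>v\<in>V. E\<^sup>*\<^sup>* u v"
    and max_degree: "\<exists>y\<in>V. degree V E y = D" and not_K: "\<not> is_K V E (D + 1)"
    using assms(1) by (auto simp: graph_class_def connected_graph_def max_degree_def)
  interpret undirected E
    using simple by unfold_locales (auto simp: simple_graph_def)
  have "finite V" using simple by (simp add: simple_graph_def)
  have V_eq: "V = closed_nbhd V E x"
    using reachable_in_closed_nbhd[OF complete] simple connected assms(2)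
      closed_nbhd_subset[OF assms(2), of E] by (auto simp: simple_graph_def)
  then have "degree V E x = D"
    using max_degree degree_in_complete_component[OF \<open>finite V\<close> complete] by metis
  then have "card V = D + 1"
    using card_closed_nbhd[OF \<open>finite V\<close>, of x] V_eq by (metis Suc_eq_plus1)
  moreover have "is_complete_graph V E"
    using in_complete_component_adjacent[OF complete] V_eq by (simp add: is_complete_graph_def)
  ultimately show False
    using not_K by (simp add: is_K_def)
qed

lemma sum_deg_set_eq_sum_degree:
  fixes f :: "nat \<Rightarrow> real"
  assumes "finite V" and "\<And>x. x \<in> V \<Longrightarrow> degree V E x \<in> {1..D}"
  shows "(\<Sum>i=1..D. f i * real (card (deg_set V E i))) = (\<Sum>x\<in>V. f (degree V E x))"
proof -
  have "(\<Sum>i=1..D. f i * real (card (deg_set V E i)))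
      = (\<Sum>i=1..D. \<Sum>x\<in>{x \<in> V. degree V E x = i}. f (degree V E x))"
    by (intro sum.cong) (simp_all add: deg_set_def)
  also have "\<dots> = (\<Sum>x\<in>V. f (degree V E x))"
    using assms by (intro sum.group) auto
  finally show ?thesis .
qed

lemma card_le_indep_number:
  assumes "finite V" and "independent_set V E S"
  shows "card S \<le> indep_number V E"
proof -
  have "{S. independent_set V E S} \<subseteq> Pow V"
    by (auto simp: independent_set_def)
  then have "finite {S. independent_set V E S}"
    using assms(1) finite_subset by blast
  then show ?thesis
    unfolding indep_number_def using assms(2) by (auto intro: Max_ge)
qed

lemma total_weight_graph_class:
  assumes "graph_class D V E"
  shows "total_weight (c(0 := 1)) V E = (\<Sum>i=1..D. c i * real (card (deg_set V E i)))"
proof -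
  have "finite V" and degree_le: "\<And>x. x \<in> V \<Longrightarrow> degree V E x \<le> D"
    using assms by (auto simp: graph_class_def max_degree_def simple_graph_def)
  have no_complete: "\<And>x. x \<in> V \<Longrightarrow> \<not> in_complete_component V E x"
    using graph_class_no_complete_component[OF assms] .
  then have degree_pos: "\<And>x. x \<in> V \<Longrightarrow> degree V E x \<noteq> 0"
    using in_complete_component_if_degree_0[OF \<open>finite V\<close>] by blast
  have "total_weight (c(0 := 1)) V E = (\<Sum>x\<in>V. c (degree V E x))"
    unfolding total_weight_def by (rule sum.cong) (simp_all add: weight_def no_complete degree_pos)
  also have "\<dots> = (\<Sum>i=1..D. c i * real (card (deg_set V E i)))"
    using degree_le degree_pos
    by (intro sum_deg_set_eq_sum_degree[OF \<open>finite V\<close>, symmetric]) (simp add: Suc_le_eq)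
  finally show ?thesis .
qed

theorem theorem4:
  fixes \<Delta> \<Delta>' :: nat and c :: "nat \<Rightarrow> real"
    and V :: "'a set" and E :: "'a \<Rightarrow> 'a \<Rightarrow> bool"
  assumes "\<Delta> \<ge> 4"
    and "c \<Delta> = 1 / real \<Delta>"
    and "\<forall>i\<in>{1..\<Delta>-1}. real i * c i + c (i + 1) = 1"
    and "3 \<le> \<Delta>'" and "\<Delta>' < \<Delta>"
    and "graph_class \<Delta>' V E"
  shows "real (indep_number V E) \<ge> (\<Sum>i=1..\<Delta>'. c i * real (card (deg_set V E i)))"
proof -
  have simple: "simple_graph V E" and "finite V"
    and degree_less: "\<And>x. x \<in> V \<Longrightarrow> degree V E x < \<Delta>"
    using assms(5,6) by (auto simp: graph_class_def max_degree_def simple_graph_def)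
  \<comment> \<open>The statement leaves \<open>c 0\<close> free; it is irrelevant, as no vertex of \<open>V\<close> has degree 0.\<close>
  interpret independence_bound \<Delta> "c(0 := 1)" E
    using assms(1-3) simple by unfold_locales (auto simp: simple_graph_def)
  obtain S where "independent_set V E S" and "total_weight (c(0 := 1)) V E \<le> real (card S)"
    using exists_independent_set_ge_total_weight[OF \<open>finite V\<close> degree_less] by blast
  then show ?thesis
    using total_weight_graph_class[OF assms(6)] card_le_indep_number[OF \<open>finite V\<close>] by fastforce
qed

end
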